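(* Let $G$ be a compact abelian group with discrete dual group $\Gamma$, let $E \subset \Gamma$, $n \in \mathbb{N}$ and $p$ a prime number. The following are equivalent: (1) $E$ is $p^n$-PR; (2) for all $1 \le k \le n$, the map $\pi_{p^k}$ is one-to-one on $E$ and $\pi_{p^k}(E)$ is $p^{n+1-k}$-PR as a subset of $\Gamma/\Gamma_{p^k}$; (3) for some $1 \le k \le n$, the map $\pi_{p^k}$ is one-to-one on $E$ and $\pi_{p^k}(E)$ is $p^{n+1-k}$-PR as a subset of $\Gamma/\Gamma_{p^k}$.
   Context: Characters are written multiplicatively; $\mathbb{Z}_N$ is identified with the $N$-th roots of unity in the unit circle $\mathbb{T}$. For a discrete abelian group $\Delta$ with compact dual $\widehat{\Delta}$, a subset $E \subset \Delta$ is $N$-PR if for every function $\varphi: E \to \mathbb{Z}_N$ there exists $x \in \widehat{\Delta}$ with $\varphi(\gamma) = \gamma(x)$ for all $\gamma \in E$. Let $\Gamma_0$ be the torsion subgroup of $\Gamma$; for a prime $p$ and $k \in \mathbb{N}$, $\Gamma_{p^k}$ is the subgroup of $\Gamma_0$ of elements whose order is not divisible by $p^k$, and $\pi_{p^k}: \Gamma \to \Gamma/\Gamma_{p^k}$ is the quotient map. *)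

theory Defs
  imports "HOL-Algebra.Algebra" Complex_Main
begin

text \<open>For a discrete abelian group every homomorphism is continuous, and by Pontryagin
  duality the points of the compact dual group are exactly these characters.\<close>
definition character :: "('a, 'b) monoid_scheme \<Rightarrow> ('a \<Rightarrow> complex) \<Rightarrow> bool" where
  "character D \<chi> \<longleftrightarrow>
     (\<forall>x \<in> carrier D. cmod (\<chi> x) = 1) \<and>
     (\<forall>x \<in> carrier D. \<forall>y \<in> carrier D. \<chi> (x \<otimes>\<^bsub>D\<^esub> y) = \<chi> x * \<chi> y)"

text \<open>Z_N identified with the N-th roots of unity.\<close>
definition roots_of_unity :: "nat \<Rightarrow> complex set" where
  "roots_of_unity N = {z. z ^ N = 1}"

definition PR :: "nat \<Rightarrow> ('a, 'b) monoid_scheme \<Rightarrow> 'a set \<Rightarrow> bool" where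
  "PR N D E \<longleftrightarrow>
     (\<forall>\<phi> \<in> E \<rightarrow> roots_of_unity N. \<exists>\<chi>. character D \<chi> \<and> (\<forall>\<gamma> \<in> E. \<chi> \<gamma> = \<phi> \<gamma>))"

definition torsion :: "('a, 'b) monoid_scheme \<Rightarrow> 'a set" where
  "torsion G = {x \<in> carrier G. \<exists>m::nat. m > 0 \<and> x [^]\<^bsub>G\<^esub> m = \<one>\<^bsub>G\<^esub>}"

definition sub_not_dvd :: "('a, 'b) monoid_scheme \<Rightarrow> nat \<Rightarrow> 'a set" where
  "sub_not_dvd G q = {x \<in> torsion G. \<not> q dvd group.ord G x}"

definition quot_map :: "('a, 'b) monoid_scheme \<Rightarrow> 'a set \<Rightarrow> 'a \<Rightarrow> 'a set" where
  "quot_map G H x = H #>\<^bsub>G\<^esub> x"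

end

theory Submission
  imports Defs
begin

text \<open>
  The circle group is divisible, so by Zorn's lemma every character of a subgroup of a discrete
  abelian group extends to the whole group. Hence E is N-PR exactly when E is N-independent
  (\<open>indep_mod N G E {\<one>}\<close>): a product of integer powers e^c(e) of finitely many elements
  of E equals 1 only if N divides every c(e). Indeed, the prescribed values then define a
  character of the subgroup generated by E.

  An element lies in Gamma_{p^k} iff it is killed by p^(k-1)*q for some q prime to p. Raising a
  relation modulo Gamma_{p^k} to that power gives a relation in Gamma; conversely, a relation in
  Gamma whose exponents are all divisible by p^a with a < k becomes a relation modulo Gamma_{p^k}
  after dividing the exponents by p^a. Iterating, E is p^n-independent iff it is
  p^(n+1-k)-independent modulo Gamma_{p^k}. This forces pi_{p^k} to be injective on E and is the
  same as p^(n+1-k)-independence of pi_{p^k}(E) in the quotient group.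
\<close>

section \<open>Products of integer powers\<close>

definition pow_prod :: "('a, 'b) monoid_scheme \<Rightarrow> 'a set \<Rightarrow> ('a \<Rightarrow> int) \<Rightarrow> 'a" where
  "pow_prod G S c = finprod G (\<lambda>e. e [^]\<^bsub>G\<^esub> c e) S"

context comm_group
begin

lemma pow_prod_closed [intro, simp]: "S \<subseteq> carrier G \<Longrightarrow> pow_prod G S c \<in> carrier G"
  unfolding pow_prod_def by (intro finprod_closed) auto

lemma pow_prod_cong:
  "S \<subseteq> carrier G \<Longrightarrow> (\<And>e. e \<in> S \<Longrightarrow> c e = d e) \<Longrightarrow> pow_prod G S c = pow_prod G S d"
  unfolding pow_prod_def by (intro finprod_cong') auto

lemma pow_prod_zero [simp]: "pow_prod G S (\<lambda>_. 0) = \<one>"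
  unfolding pow_prod_def by (intro finprod_one_eqI) simp

lemma pow_prod_add:
  assumes "S \<subseteq> carrier G"
  shows "pow_prod G S (\<lambda>e. c e + d e) = pow_prod G S c \<otimes> pow_prod G S d"
proof -
  have "pow_prod G S (\<lambda>e. c e + d e) = finprod G (\<lambda>e. e [^] c e \<otimes> e [^] d e) S"
    unfolding pow_prod_def using assms by (intro finprod_cong') (auto simp: int_pow_mult)
  also have "\<dots> = pow_prod G S c \<otimes> pow_prod G S d"
    unfolding pow_prod_def using assms by (intro finprod_multf) auto
  finally show ?thesis .
qed

lemma pow_prod_uminus:
  assumes "S \<subseteq> carrier G"
  shows "pow_prod G S (\<lambda>e. - c e) = inv (pow_prod G S c)"
proof -
  have "pow_prod G S (\<lambda>e. - c e) \<otimes> pow_prod G S c = \<one>"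
    using pow_prod_add[OF assms, of "\<lambda>e. - c e" c] by simp
  then show ?thesis
    using assms by (simp add: inv_equality)
qed

lemma pow_prod_eq_iff:
  assumes "S \<subseteq> carrier G"
  shows "pow_prod G S c = pow_prod G S d \<longleftrightarrow> pow_prod G S (\<lambda>e. c e - d e) = \<one>"
proof -
  have "pow_prod G S c = pow_prod G S (\<lambda>e. c e - d e) \<otimes> pow_prod G S d"
    using pow_prod_add[OF assms, of "\<lambda>e. c e - d e" d] by simp
  then show ?thesis
    using assms by (metis l_one one_closed pow_prod_closed r_cancel_one')
qed

lemma pow_prod_int_pow:
  assumes "S \<subseteq> carrier G"
  shows "pow_prod G S c [^] (m::int) = pow_prod G S (\<lambda>e. c e * m)"
  using assms
proof (induction S rule: infinite_finite_induct)
  case (insert y F)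
  then have "(y [^] c y \<otimes> pow_prod G F c) [^] m = (y [^] c y) [^] m \<otimes> pow_prod G F c [^] m"
    by (intro int_pow_mult_distrib) (auto simp: m_comm)
  moreover have "pow_prod G (insert y F) c' = y [^] c' y \<otimes> pow_prod G F c'" for c'
    unfolding pow_prod_def using insert by (intro finprod_insert) auto
  ultimately show ?case
    using insert by (simp add: int_pow_pow)
qed (simp_all add: pow_prod_def)

lemma pow_prod_zero_extend:
  assumes "finite T" "S \<subseteq> T" "T \<subseteq> carrier G"
  shows "pow_prod G S c = pow_prod G T (\<lambda>e. if e \<in> S then c e else 0)"
  unfolding pow_prod_def using assms by (intro finprod_mono_neutral_cong_left) auto

lemma pow_prod_hom_image:
  assumes h: "h \<in> hom G G2" and G2: "comm_group G2" and S: "S \<subseteq> carrier G" "inj_on h S"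
  shows "h (pow_prod G S (\<lambda>e. c (h e))) = pow_prod G2 (h ` S) c"
proof -
  interpret G2: comm_group G2 by (rule G2)
  interpret group_hom G G2 h by unfold_locales (rule h)
  show ?thesis
    using S
  proof (induction S rule: infinite_finite_induct)
    case (infinite A)
    then show ?case by (simp add: pow_prod_def finite_image_iff)
  next
    case empty
    then show ?case by (simp add: pow_prod_def)
  next
    case (insert y F)
    have "pow_prod G (insert y F) c' = y [^] c' y \<otimes> pow_prod G F c'" for c'
      unfolding pow_prod_def using insert by (intro finprod_insert) auto
    moreover have "pow_prod G2 (insert (h y) (h ` F)) c = h y [^]\<^bsub>G2\<^esub> c (h y) \<otimes>\<^bsub>G2\<^esub> pow_prod G2 (h ` F) c"
      unfolding pow_prod_def using insert by (intro G2.finprod_insert) auto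
    ultimately show ?case
      using insert by (simp add: hom_int_pow image_subset_iff)
  qed
qed

end

section \<open>Extension of partial characters\<close>

text \<open>A partial character is given by its graph, a character of the subgroup \<open>Domain R\<close>; with
  graphs, the union of a chain is again a partial character without any choice of values.\<close>
definition partial_character :: "('a, 'b) monoid_scheme \<Rightarrow> ('a \<times> complex) set \<Rightarrow> bool" where
  "partial_character G R \<longleftrightarrow>
     single_valued R \<and> R \<subseteq> carrier G \<times> {z. cmod z = 1} \<and> (\<one>\<^bsub>G\<^esub>, 1) \<in> R \<and>
     (\<forall>x z. (x, z) \<in> R \<longrightarrow> (inv\<^bsub>G\<^esub> x, inverse z) \<in> R) \<and>
     (\<forall>x z y w. (x, z) \<in> R \<longrightarrow> (y, w) \<in> R \<longrightarrow> (x \<otimes>\<^bsub>G\<^esub> y, z * w) \<in> R)"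

lemma partial_character_directed_Union:
  assumes "\<C> \<noteq> {}" and char: "\<And>R. R \<in> \<C> \<Longrightarrow> partial_character G R"
    and directed: "\<And>R1 R2. R1 \<in> \<C> \<Longrightarrow> R2 \<in> \<C> \<Longrightarrow> \<exists>R\<in>\<C>. R1 \<union> R2 \<subseteq> R"
  shows "partial_character G (\<Union>\<C>)"
proof -
  have common: "\<exists>R\<in>\<C>. a \<in> R \<and> b \<in> R" if ab: "a \<in> \<Union>\<C>" "b \<in> \<Union>\<C>" for a b
  proof -
    obtain R1 R2 where R12: "R1 \<in> \<C>" "R2 \<in> \<C>" "a \<in> R1" "b \<in> R2"
      using ab by blast
    obtain R where "R \<in> \<C>" "R1 \<union> R2 \<subseteq> R"
      using directed[OF R12(1,2)] by blast
    with R12 show ?thesis by blast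
  qed
  have "single_valued (\<Union>\<C>)"
  proof (rule single_valuedI)
    fix x z w assume "(x, z) \<in> \<Union>\<C>" "(x, w) \<in> \<Union>\<C>"
    then obtain R where "R \<in> \<C>" "(x, z) \<in> R" "(x, w) \<in> R"
      using common by blast
    then show "z = w"
      using char[of R] unfolding partial_character_def single_valued_def by blast
  qed
  moreover have "(x \<otimes>\<^bsub>G\<^esub> y, z * w) \<in> \<Union>\<C>"
    if xy: "(x, z) \<in> \<Union>\<C>" "(y, w) \<in> \<Union>\<C>" for x z y w
  proof -
    obtain R where "R \<in> \<C>" "(x, z) \<in> R" "(y, w) \<in> R"
      using common[OF xy] by blast
    then show ?thesis
      using char[of R] unfolding partial_character_def by blast
  qed
  moreover have "\<Union>\<C> \<subseteq> carrier G \<times> {z. cmod z = 1}"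
    using char unfolding partial_character_def by blast
  moreover have "(\<one>\<^bsub>G\<^esub>, 1) \<in> \<Union>\<C>"
    using assms(1) char unfolding partial_character_def by blast
  moreover have "\<forall>x z. (x, z) \<in> \<Union>\<C> \<longrightarrow> (inv\<^bsub>G\<^esub> x, inverse z) \<in> \<Union>\<C>"
    using char unfolding partial_character_def by blast
  ultimately show ?thesis
    unfolding partial_character_def by blast
qed

lemma partial_character_maximal:
  assumes "partial_character G R"
  obtains M where "partial_character G M" "R \<subseteq> M"
    "\<And>M'. partial_character G M' \<Longrightarrow> M \<subseteq> M' \<Longrightarrow> M' = M"
proof -
  define \<A> where "\<A> = {R'. partial_character G R' \<and> R \<subseteq> R'}"
  have "\<exists>M\<in>\<A>. \<forall>R1\<in>\<A>. M \<subseteq> R1 \<longrightarrow> R1 = M"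
  proof (rule subset_Zorn_nonempty)
    show "\<A> \<noteq> {}"
      using assms unfolding \<A>_def by blast
  next
    fix \<C> assume \<C>: "\<C> \<noteq> {}" "subset.chain \<A> \<C>"
    have "partial_character G (\<Union>\<C>)"
    proof (rule partial_character_directed_Union[OF \<C>(1)])
      show "partial_character G R1" if "R1 \<in> \<C>" for R1
        using \<C>(2) that unfolding \<A>_def subset_chain_def by blast
      show "\<exists>R\<in>\<C>. R1 \<union> R2 \<subseteq> R" if "R1 \<in> \<C>" "R2 \<in> \<C>" for R1 R2
        using \<C>(2) that unfolding subset_chain_def by (metis Un_absorb1 Un_absorb2 order_refl)
    qed
    moreover have "R \<subseteq> \<Union>\<C>"
      using \<C> unfolding \<A>_def subset_chain_def by blast
    ultimately show "\<Union>\<C> \<in> \<A>"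
      unfolding \<A>_def by blast
  qed
  then obtain M where "M \<in> \<A>" and max: "\<And>R1. R1 \<in> \<A> \<Longrightarrow> M \<subseteq> R1 \<Longrightarrow> R1 = M"
    by blast
  then show ?thesis
    using that unfolding \<A>_def by auto
qed

lemma complex_unit_root:
  assumes "cmod z = 1" "m > 0"
  obtains w where "cmod w = 1" "w ^ m = z"
proof -
  have "z \<noteq> 0"
    using assms by auto
  then have "cis (Arg z / m) ^ m = z"
    using assms by (simp add: DeMoivre cis_Arg sgn_eq)
  then show ?thesis using that[of "cis (Arg z / m)"] by simp
qed

context group
begin

lemma partial_character_memD:
  assumes "partial_character G R" "(x, z) \<in> R"
  shows "x \<in> carrier G" "cmod z = 1" "z \<noteq> 0"
  using assms unfolding partial_character_def by auto

lemma partial_character_eq: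
  assumes "partial_character G R" "(x, z) \<in> R" "(x, w) \<in> R"
  shows "z = w"
  using assms unfolding partial_character_def single_valued_def by blast

lemma partial_character_mult:
  assumes "partial_character G R" "(x, z) \<in> R" "(y, w) \<in> R"
  shows "(x \<otimes> y, z * w) \<in> R"
  using assms unfolding partial_character_def by blast

lemma partial_character_inv:
  assumes "partial_character G R" "(x, z) \<in> R"
  shows "(inv x, inverse z) \<in> R"
  using assms unfolding partial_character_def by blast

lemma partial_character_nat_pow:
  assumes "partial_character G R" "(x, z) \<in> R"
  shows "(x [^] (n::nat), z ^ n) \<in> R"
proof (induction n)
  case 0
  then show ?case using assms(1) unfolding partial_character_def by simp
next
  case (Suc n)
  then show ?case using partial_character_mult[OF assms(1) Suc assms(2)] by (simp add: mult.commute)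
qed

lemma partial_character_int_pow:
  assumes "partial_character G R" "(x, z) \<in> R"
  shows "(x [^] (j::int), z powi j) \<in> R"
proof (cases j rule: int_cases2)
  case (nonneg n)
  then show ?thesis using partial_character_nat_pow[OF assms] by (simp add: int_pow_int)
next
  case (nonpos n)
  then show ?thesis
    using partial_character_inv[OF assms(1) partial_character_nat_pow[OF assms]]
      partial_character_memD[OF assms]
    by (simp add: int_pow_neg_int power_int_minus)
qed

lemma character_graph:
  assumes "character G \<chi>"
  shows "partial_character G {(x, \<chi> x) | x. x \<in> carrier G}"
proof -
  have mult: "\<chi> (x \<otimes> y) = \<chi> x * \<chi> y" and norm: "cmod (\<chi> x) = 1"
    if "x \<in> carrier G" "y \<in> carrier G" for x y
    using assms that unfolding character_def by auto
  have one: "\<chi> \<one> = 1"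
    using mult[of \<one> \<one>] norm[of \<one> \<one>] by (auto simp: norm_mult)
  have "\<chi> (inv x) = inverse (\<chi> x)" if "x \<in> carrier G" for x
    using mult[of x "inv x"] that one by (simp add: inverse_unique)
  then show ?thesis
    unfolding partial_character_def single_valued_def using one mult norm by auto
qed

lemma partial_character_Domain_pow_dvd:
  assumes R: "partial_character G R" and g: "g \<in> carrier G"
    and m: "m > 0" "g [^] m \<in> Domain R"
    and minimal: "\<And>k. 0 < k \<Longrightarrow> k < m \<Longrightarrow> g [^] k \<notin> Domain R"
    and j: "g [^] (j::int) \<in> Domain R"
  shows "int m dvd j"
proof -
  obtain z z0 where z: "(g [^] j, z) \<in> R" and z0: "(g [^] int m, z0) \<in> R"
    using j m(2) by (auto simp: int_pow_int)
  define t where "t = j div int m"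
  have r: "0 \<le> j mod int m" "j mod int m < int m"
    using m(1) by simp_all
  have "(g [^] j \<otimes> (g [^] int m) [^] (- t), z * z0 powi (- t)) \<in> R"
    using partial_character_mult[OF R z partial_character_int_pow[OF R z0]] .
  moreover have "g [^] j \<otimes> (g [^] int m) [^] (- t) = g [^] nat (j mod int m)"
    using g r by (simp add: int_pow_pow pow_nat flip: int_pow_mult) (simp add: t_def minus_mult_div_eq_mod)
  ultimately have "g [^] nat (j mod int m) \<in> Domain R"
    by (metis Domain.DomainI)
  with minimal[of "nat (j mod int m)"] have "j mod int m = 0"
    using r by linarith
  then show ?thesis
    by (simp add: mod_eq_0_iff_dvd)
qed

text \<open>This is where the divisibility of the circle group enters.\<close>
lemma partial_character_root:
  assumes R: "partial_character G R" and g: "g \<in> carrier G"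
  obtains w where "cmod w = 1" "\<And>j z. (g [^] (j::int), z) \<in> R \<Longrightarrow> w powi j = z"
proof (cases "\<exists>m::nat. m > 0 \<and> g [^] m \<in> Domain R")
  case True
  define m where "m = (LEAST m::nat. m > 0 \<and> g [^] m \<in> Domain R)"
  have m: "m > 0" "g [^] m \<in> Domain R"
    using LeastI_ex[OF True] unfolding m_def by auto
  have minimal: "g [^] k \<notin> Domain R" if "0 < k" "k < m" for k
    using not_less_Least[of k "\<lambda>m. m > 0 \<and> g [^] m \<in> Domain R"] that unfolding m_def by blast
  obtain z0 where z0: "(g [^] int m, z0) \<in> R"
    using m(2) by (auto simp: int_pow_int)
  obtain w where w: "cmod w = 1" "w ^ m = z0"
    using complex_unit_root[OF partial_character_memD(2)[OF R z0] m(1)] by blast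
  have "w powi j = z" if jz: "(g [^] j, z) \<in> R" for j z
  proof -
    obtain t where t: "j = int m * t"
      using partial_character_Domain_pow_dvd[OF R g m minimal] jz by (meson DomainI dvdE)
    then have "(g [^] j, z0 powi t) \<in> R"
      using partial_character_int_pow[OF R z0] g by (simp add: int_pow_pow)
    then have "z = z0 powi t"
      using partial_character_eq[OF R jz] by blast
    then show ?thesis
      using t w(2) by (simp add: power_int_mult)
  qed
  then show ?thesis
    using that w(1) by blast
next
  case False
  have trivial: "1 powi j = z" if jz: "(g [^] j, z) \<in> R" for j z
  proof -
    have "(g [^] (- j), inverse z) \<in> R"
      using partial_character_inv[OF R jz] g by (simp add: int_pow_neg)
    with jz have "g [^] \<bar>j\<bar> \<in> Domain R"
      by (cases "j \<ge> 0") (auto simp only: abs_of_nonneg abs_of_neg not_le intro: DomainI)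
    then have "g [^] nat \<bar>j\<bar> \<in> Domain R"
      by (metis pow_nat abs_ge_zero)
    then have "j = 0"
      using False by (meson zero_less_nat_eq zero_less_abs_iff)
    moreover have "(\<one>, 1) \<in> R"
      using R unfolding partial_character_def by blast
    ultimately show ?thesis
      using partial_character_eq[OF R, of \<one> z 1] jz by simp
  qed
  show ?thesis
    by (rule that[of 1]) (simp, rule trivial)
qed

end

definition adjoin_graph ::
  "('a, 'b) monoid_scheme \<Rightarrow> ('a \<times> complex) set \<Rightarrow> 'a \<Rightarrow> complex \<Rightarrow> ('a \<times> complex) set" where
  "adjoin_graph G R g w = {(x \<otimes>\<^bsub>G\<^esub> g [^]\<^bsub>G\<^esub> (j::int), z * w powi j) | x z j. (x, z) \<in> R}"

context comm_group
begin

lemma adjoin_graphI: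
  "(x, z) \<in> R \<Longrightarrow> (x \<otimes> g [^] (j::int), z * w powi j) \<in> adjoin_graph G R g w"
  unfolding adjoin_graph_def by blast

lemma adjoin_graphE:
  assumes "a \<in> adjoin_graph G R g w"
  obtains x z j where "(x, z) \<in> R" "a = (x \<otimes> g [^] (j::int), z * w powi j)"
  using assms unfolding adjoin_graph_def by blast

lemma single_valued_adjoin_graph:
  assumes R: "partial_character G R" and g: "g \<in> carrier G" and w: "w \<noteq> 0"
    and root: "\<And>j z. (g [^] (j::int), z) \<in> R \<Longrightarrow> w powi j = z"
  shows "single_valued (adjoin_graph G R g w)"
proof (rule single_valuedI)
  fix a b1 b2 assume "(a, b1) \<in> adjoin_graph G R g w" "(a, b2) \<in> adjoin_graph G R g w"
  then obtain x z j x' z' j' where xz: "(x, z) \<in> R" "(x', z') \<in> R"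
    and a: "a = x \<otimes> g [^] j" "a = x' \<otimes> g [^] j'"
    and b: "b1 = z * w powi j" "b2 = z' * w powi j'"
    by (metis adjoin_graphE prod.inject)
  have x: "x \<in> carrier G" "x' \<in> carrier G" and "z \<noteq> 0"
    using partial_character_memD[OF R] xz by auto
  have "g [^] (j - j') = inv x \<otimes> x'"
    using a x g by (simp add: int_pow_diff)
      (metis inv_solve_left inv_solve_right int_pow_closed m_assoc m_closed inv_closed)
  then have "w powi (j - j') = inverse z * z'"
    using root partial_character_mult[OF R partial_character_inv[OF R xz(1)] xz(2)] by simp
  then show "b1 = b2"
    using b w \<open>z \<noteq> 0\<close> by (simp add: power_int_diff field_simps)
qed

lemma partial_character_adjoin_graph:
  assumes R: "partial_character G R" and g: "g \<in> carrier G" and w: "cmod w = 1"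
    and root: "\<And>j z. (g [^] (j::int), z) \<in> R \<Longrightarrow> w powi j = z"
  shows "partial_character G (adjoin_graph G R g w)"
proof -
  have w0: "w \<noteq> 0"
    using w by auto
  note mem = partial_character_memD[OF R]
  have "adjoin_graph G R g w \<subseteq> carrier G \<times> {z. cmod z = 1}"
  proof
    fix a assume "a \<in> adjoin_graph G R g w"
    then obtain x z j where "(x, z) \<in> R" "a = (x \<otimes> g [^] (j::int), z * w powi j)"
      by (rule adjoin_graphE)
    then show "a \<in> carrier G \<times> {z. cmod z = 1}"
      using mem g w by (simp add: norm_mult norm_power_int)
  qed
  moreover have "(\<one>, 1) \<in> adjoin_graph G R g w"
    using adjoin_graphI[of \<one> 1 R g 0] R unfolding partial_character_def by simp
  moreover have "(inv a, inverse b) \<in> adjoin_graph G R g w"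
    if ab: "(a, b) \<in> adjoin_graph G R g w" for a b
  proof -
    obtain x z j where xz: "(x, z) \<in> R" "(a, b) = (x \<otimes> g [^] (j::int), z * w powi j)"
      using adjoin_graphE[OF ab] by blast
    then have "(inv a, inverse b) = (inv x \<otimes> g [^] (- j), inverse z * w powi (- j))"
      using mem(1) g by (simp add: inv_mult int_pow_neg power_int_minus)
    then show ?thesis
      using adjoin_graphI[OF partial_character_inv[OF R xz(1)]] by simp
  qed
  moreover have "(a \<otimes> a', b * b') \<in> adjoin_graph G R g w"
    if ab: "(a, b) \<in> adjoin_graph G R g w" and ab': "(a', b') \<in> adjoin_graph G R g w" for a b a' b'
  proof -
    obtain x z j where xz: "(x, z) \<in> R" "(a, b) = (x \<otimes> g [^] (j::int), z * w powi j)"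
      using adjoin_graphE[OF ab] by blast
    obtain x' z' j' where xz': "(x', z') \<in> R" "(a', b') = (x' \<otimes> g [^] (j'::int), z' * w powi j')"
      using adjoin_graphE[OF ab'] by blast
    have "(a \<otimes> a', b * b') = ((x \<otimes> x') \<otimes> g [^] (j + j'), (z * z') * w powi (j + j'))"
      using xz xz' mem(1) g w0 by (simp add: int_pow_mult power_int_add m_ac)
    then show ?thesis
      using adjoin_graphI[OF partial_character_mult[OF R xz(1) xz'(1)]] by simp
  qed
  ultimately show ?thesis
    using single_valued_adjoin_graph[OF R g w0 root] unfolding partial_character_def by blast
qed

lemma adjoin_graph_supset:
  assumes R: "partial_character G R" and g: "g \<in> carrier G"
  shows "R \<subseteq> adjoin_graph G R g w" "(g, w) \<in> adjoin_graph G R g w"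
proof -
  show "R \<subseteq> adjoin_graph G R g w"
  proof
    fix a assume "a \<in> R"
    moreover obtain x z where "a = (x, z)"
      by (cases a)
    ultimately show "a \<in> adjoin_graph G R g w"
      using adjoin_graphI[of x z R g 0] partial_character_memD(1)[OF R] by auto
  qed
  show "(g, w) \<in> adjoin_graph G R g w"
    using adjoin_graphI[of \<one> 1 R g 1] R g unfolding partial_character_def by simp
qed

theorem partial_character_extends:
  assumes "partial_character G R"
  obtains \<chi> where "character G \<chi>" "\<And>x z. (x, z) \<in> R \<Longrightarrow> \<chi> x = z"
proof -
  obtain M where M: "partial_character G M" "R \<subseteq> M"
    and max: "\<And>M'. partial_character G M' \<Longrightarrow> M \<subseteq> M' \<Longrightarrow> M' = M"
    using partial_character_maximal[OF assms] by blast
  have total: "\<exists>z. (x, z) \<in> M" if x: "x \<in> carrier G" for x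
  proof -
    obtain w where "cmod w = 1" "\<And>j z. (x [^] (j::int), z) \<in> M \<Longrightarrow> w powi j = z"
      using partial_character_root[OF M(1) x] by blast
    then have "adjoin_graph G M x w = M"
      using max partial_character_adjoin_graph[OF M(1) x] adjoin_graph_supset[OF M(1) x] by blast
    then show ?thesis
      using adjoin_graph_supset(2)[OF M(1) x] by auto
  qed
  define \<chi> where "\<chi> x = (THE z. (x, z) \<in> M)" for x
  have \<chi>: "(x, \<chi> x) \<in> M" if "x \<in> carrier G" for x
    using total[OF that] partial_character_eq[OF M(1)] unfolding \<chi>_def by (metis theI)
  show ?thesis
  proof (rule that)
    show "character G \<chi>"
      unfolding character_def
    proof (intro conjI ballI)
      fix x y assume xy: "x \<in> carrier G" "y \<in> carrier G"
      show "cmod (\<chi> x) = 1"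
        using partial_character_memD(2)[OF M(1) \<chi>[OF xy(1)]] .
      show "\<chi> (x \<otimes> y) = \<chi> x * \<chi> y"
        using partial_character_eq[OF M(1) \<chi>[of "x \<otimes> y"]
            partial_character_mult[OF M(1) \<chi>[OF xy(1)] \<chi>[OF xy(2)]]] xy
        by simp
    qed
  next
    fix x z assume "(x, z) \<in> R"
    then show "\<chi> x = z"
      using M partial_character_eq[OF M(1) \<chi>] partial_character_memD(1)[OF M(1)] by blast
  qed
qed

end

section \<open>PR sets are independent sets\<close>

lemma root_of_unity_powi_cong:
  fixes z :: complex
  assumes "z ^ N = 1" "int N dvd a - b"
  shows "z powi a = z powi b"
proof -
  obtain t where t: "a = b + int N * t"
    using assms(2) by (metis add_diff_cancel_left' diff_add_cancel dvdE)
  show ?thesis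
  proof (cases "N = 0")
    case False
    then have "z \<noteq> 0"
      using assms(1) by (metis power_0_left zero_neq_one)
    then show ?thesis
      using assms(1) by (simp add: t power_int_add power_int_mult)
  qed (use t in simp)
qed

lemma cis_root_powi_eq_1_imp_dvd:
  assumes "N > 0" "cis (2 * pi / N) powi k = 1"
  shows "int N dvd k"
proof -
  have "cos (of_int k * (2 * pi / N)) = 1"
    using assms(2) by (simp add: cis_power_int complex_eq_iff)
  then obtain n :: int where "of_int k * (2 * pi / N) = of_int n * 2 * pi"
    using cos_one_2pi_int by blast
  then have "real_of_int k = real_of_int (n * int N)"
    using assms(1) by (simp add: field_simps)
  then show ?thesis
    by (simp only: of_int_eq_iff) simp
qed

definition indep_mod :: "nat \<Rightarrow> ('a, 'b) monoid_scheme \<Rightarrow> 'a set \<Rightarrow> 'a set \<Rightarrow> bool" where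
  "indep_mod N G E H \<longleftrightarrow>
     (\<forall>S c. finite S \<and> S \<subseteq> E \<and> pow_prod G S c \<in> H \<longrightarrow> (\<forall>e\<in>S. int N dvd c e))"

definition span_graph :: "('a, 'b) monoid_scheme \<Rightarrow> 'a set \<Rightarrow> ('a \<Rightarrow> complex) \<Rightarrow> ('a \<times> complex) set" where
  "span_graph G S \<phi> = range (\<lambda>c. (pow_prod G S c, \<Prod>e\<in>S. \<phi> e powi c e))"

context comm_group
begin

lemma span_graph_mono:
  assumes "finite T" "S \<subseteq> T" "T \<subseteq> carrier G"
  shows "span_graph G S \<phi> \<subseteq> span_graph G T \<phi>"
proof
  fix a assume "a \<in> span_graph G S \<phi>"
  then obtain c where a: "a = (pow_prod G S c, \<Prod>e\<in>S. \<phi> e powi c e)"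
    unfolding span_graph_def by blast
  define c' where "c' e = (if e \<in> S then c e else 0)" for e
  have "pow_prod G S c = pow_prod G T c'"
    unfolding c'_def using assms by (rule pow_prod_zero_extend)
  moreover have "(\<Prod>e\<in>S. \<phi> e powi c e) = (\<Prod>e\<in>T. \<phi> e powi c' e)"
    unfolding c'_def using assms by (intro prod.mono_neutral_cong_left) auto
  ultimately show "a \<in> span_graph G T \<phi>"
    unfolding span_graph_def a by blast
qed

lemma single_valued_span_graph:
  assumes E: "E \<subseteq> carrier G" and indep: "indep_mod N G E {\<one>}"
    and S: "finite S" "S \<subseteq> E" and \<phi>: "\<And>e. e \<in> S \<Longrightarrow> \<phi> e ^ N = 1"
  shows "single_valued (span_graph G S \<phi>)"
proof (rule single_valuedI)
  fix x z w assume "(x, z) \<in> span_graph G S \<phi>" "(x, w) \<in> span_graph G S \<phi>"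
  then obtain c d where x: "x = pow_prod G S c" "x = pow_prod G S d"
    and zw: "z = (\<Prod>e\<in>S. \<phi> e powi c e)" "w = (\<Prod>e\<in>S. \<phi> e powi d e)"
    unfolding span_graph_def by blast
  have SG: "S \<subseteq> carrier G"
    using S E by blast
  have "pow_prod G S (\<lambda>e. c e - d e) \<in> {\<one>}"
    using x pow_prod_eq_iff[OF SG, of c d] by simp
  then have "int N dvd c e - d e" if "e \<in> S" for e
    using indep S that unfolding indep_mod_def by blast
  then show "z = w"
    unfolding zw using \<phi> by (intro prod.cong refl root_of_unity_powi_cong)
qed

lemma partial_character_span_graph:
  assumes E: "E \<subseteq> carrier G" and indep: "indep_mod N G E {\<one>}" and N: "N > 0"
    and S: "finite S" "S \<subseteq> E" and \<phi>: "\<And>e. e \<in> S \<Longrightarrow> \<phi> e ^ N = 1"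
  shows "partial_character G (span_graph G S \<phi>)"
proof -
  have SG: "S \<subseteq> carrier G"
    using S E by blast
  have \<phi>0: "\<phi> e \<noteq> 0" and \<phi>1: "cmod (\<phi> e) = 1" if "e \<in> S" for e
    using \<phi>[OF that] N power_eq_1_iff[of "\<phi> e" N] by (auto simp: power_0_left)
  have "single_valued (span_graph G S \<phi>)"
    using E indep S \<phi> by (rule single_valued_span_graph)
  moreover have "span_graph G S \<phi> \<subseteq> carrier G \<times> {z. cmod z = 1}"
    unfolding span_graph_def using SG \<phi>1 by (auto simp: prod_norm[symmetric] norm_power_int)
  moreover have "(\<one>, 1) \<in> span_graph G S \<phi>"
    unfolding span_graph_def by (intro range_eqI[of _ _ "\<lambda>_. 0"]) simp
  moreover have "(inv x, inverse z) \<in> span_graph G S \<phi>" if xz: "(x, z) \<in> span_graph G S \<phi>" for x z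
  proof -
    obtain c where "x = pow_prod G S c" "z = (\<Prod>e\<in>S. \<phi> e powi c e)"
      using xz unfolding span_graph_def by blast
    then have "(inv x, inverse z) = (pow_prod G S (\<lambda>e. - c e), \<Prod>e\<in>S. \<phi> e powi (- c e))"
      using SG prod_inversef[of "\<lambda>e. \<phi> e powi c e" S]
      by (simp add: pow_prod_uminus power_int_minus comp_def)
    then show ?thesis
      unfolding span_graph_def by (intro range_eqI)
  qed
  moreover have "(x \<otimes> y, z * w) \<in> span_graph G S \<phi>"
    if xz: "(x, z) \<in> span_graph G S \<phi>" and yw: "(y, w) \<in> span_graph G S \<phi>" for x y z w
  proof -
    obtain c d where "x = pow_prod G S c" "z = (\<Prod>e\<in>S. \<phi> e powi c e)"
      "y = pow_prod G S d" "w = (\<Prod>e\<in>S. \<phi> e powi d e)"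
      using xz yw unfolding span_graph_def by blast
    then have "(x \<otimes> y, z * w) = (pow_prod G S (\<lambda>e. c e + d e), \<Prod>e\<in>S. \<phi> e powi (c e + d e))"
      using SG \<phi>0 by (simp add: pow_prod_add power_int_add prod.distrib)
    then show ?thesis
      unfolding span_graph_def by (intro range_eqI)
  qed
  ultimately show ?thesis
    unfolding partial_character_def by blast
qed

lemma indep_mod_one_imp_PR:
  assumes N: "N > 0" and E: "E \<subseteq> carrier G" and indep: "indep_mod N G E {\<one>}"
  shows "PR N G E"
  unfolding PR_def
proof
  fix \<phi> assume "\<phi> \<in> E \<rightarrow> roots_of_unity N"
  then have \<phi>: "\<phi> e ^ N = 1" if "e \<in> E" for e
    using that unfolding roots_of_unity_def by blast
  define \<C> where "\<C> = (\<lambda>S. span_graph G S \<phi>) ` {S. finite S \<and> S \<subseteq> E}"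
  have "partial_character G (\<Union>\<C>)"
  proof (rule partial_character_directed_Union)
    show "\<C> \<noteq> {}"
      unfolding \<C>_def by blast
    show "partial_character G R" if "R \<in> \<C>" for R
      using that partial_character_span_graph[OF E indep N] \<phi> unfolding \<C>_def by blast
    show "\<exists>R\<in>\<C>. R1 \<union> R2 \<subseteq> R" if R12: "R1 \<in> \<C>" "R2 \<in> \<C>" for R1 R2
    proof -
      obtain S1 S2 where S: "finite S1" "S1 \<subseteq> E" "finite S2" "S2 \<subseteq> E"
        and R: "R1 = span_graph G S1 \<phi>" "R2 = span_graph G S2 \<phi>"
        using R12 unfolding \<C>_def by blast
      have "R1 \<subseteq> span_graph G (S1 \<union> S2) \<phi>" "R2 \<subseteq> span_graph G (S1 \<union> S2) \<phi>"
        unfolding R using S E by (intro span_graph_mono; auto)+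
      then show ?thesis
        using S unfolding \<C>_def by blast
    qed
  qed
  then obtain \<chi> where \<chi>: "character G \<chi>" "\<And>x z. (x, z) \<in> \<Union>\<C> \<Longrightarrow> \<chi> x = z"
    using partial_character_extends by blast
  have "(e, \<phi> e) \<in> \<Union>\<C>" if "e \<in> E" for e
  proof -
    have "(pow_prod G {e} (\<lambda>_. 1), \<Prod>e'\<in>{e}. \<phi> e' powi 1) \<in> span_graph G {e} \<phi>"
      unfolding span_graph_def by blast
    moreover have "pow_prod G {e} (\<lambda>_. 1) = e"
      using that E unfolding pow_prod_def by auto
    ultimately show ?thesis
      using that unfolding \<C>_def by auto
  qed
  then show "\<exists>\<chi>. character G \<chi> \<and> (\<forall>\<gamma>\<in>E. \<chi> \<gamma> = \<phi> \<gamma>)"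
    using \<chi> by blast
qed

lemma partial_character_pow_prod:
  assumes R: "partial_character G R" and S: "finite S" "\<And>e. e \<in> S \<Longrightarrow> (e, f e) \<in> R"
  shows "(pow_prod G S c, \<Prod>e\<in>S. f e powi c e) \<in> R"
  using S
proof (induction S rule: finite_induct)
  case empty
  then show ?case using R unfolding partial_character_def by (simp add: pow_prod_def)
next
  case (insert y F)
  have "pow_prod G (insert y F) c = y [^] c y \<otimes> pow_prod G F c"
    unfolding pow_prod_def using insert partial_character_memD(1)[OF R]
    by (intro finprod_insert) auto
  moreover have "(y [^] c y, f y powi c y) \<in> R"
    using partial_character_int_pow[OF R] insert by simp
  ultimately show ?case
    using partial_character_mult[OF R _ insert.IH] insert by simp
qed

lemma PR_imp_indep_mod_one:
  assumes N: "N > 0" and E: "E \<subseteq> carrier G" and PR: "PR N G E"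
  shows "indep_mod N G E {\<one>}"
  unfolding indep_mod_def
proof (intro allI impI ballI)
  fix S c e0 assume S: "finite S \<and> S \<subseteq> E \<and> pow_prod G S c \<in> {\<one>}" and e0: "e0 \<in> S"
  define \<omega> where "\<omega> = cis (2 * pi / N)"
  define \<phi> where "\<phi> e = (if e = e0 then \<omega> else 1)" for e
  have "\<omega> ^ N = 1"
    using N unfolding \<omega>_def by (simp add: DeMoivre)
  then have "\<phi> \<in> E \<rightarrow> roots_of_unity N"
    unfolding roots_of_unity_def \<phi>_def by auto
  then obtain \<chi> where \<chi>: "character G \<chi>" "\<And>\<gamma>. \<gamma> \<in> E \<Longrightarrow> \<chi> \<gamma> = \<phi> \<gamma>"
    using PR unfolding PR_def by blast
  let ?graph = "{(x, \<chi> x) | x. x \<in> carrier G}"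
  have graph: "partial_character G ?graph"
    by (rule character_graph[OF \<chi>(1)])
  have "(pow_prod G S c, \<Prod>e\<in>S. \<chi> e powi c e) \<in> ?graph"
    using S E by (intro partial_character_pow_prod[OF graph]) auto
  then have "(\<one>, \<Prod>e\<in>S. \<chi> e powi c e) \<in> ?graph"
    using S by simp
  moreover have "(\<one>, 1) \<in> ?graph"
    using graph unfolding partial_character_def by blast
  ultimately have "(\<Prod>e\<in>S. \<chi> e powi c e) = 1"
    by (rule partial_character_eq[OF graph])
  moreover have "(\<Prod>e\<in>S. \<chi> e powi c e) = (\<Prod>e\<in>S. if e = e0 then \<omega> powi c e0 else 1)"
    using S \<chi>(2) unfolding \<phi>_def by (intro prod.cong) auto
  ultimately have "\<omega> powi c e0 = 1"
    using S e0 by simp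
  then show "int N dvd c e0"
    using cis_root_powi_eq_1_imp_dvd[OF N] unfolding \<omega>_def by blast
qed

lemma PR_iff_indep_mod_one:
  assumes "N > 0" "E \<subseteq> carrier G"
  shows "PR N G E \<longleftrightarrow> indep_mod N G E {\<one>}"
  using PR_imp_indep_mod_one indep_mod_one_imp_PR assms by blast

section \<open>Independence modulo a subgroup and quotients\<close>

lemma indep_mod_imp_inj_on_quot_map:
  assumes H: "subgroup H G" and E: "E \<subseteq> carrier G" and indep: "indep_mod N G E H" and N: "N \<noteq> 1"
  shows "inj_on (quot_map G H) E"
proof (rule inj_onI, rule ccontr)
  fix e e' assume e: "e \<in> E" "e' \<in> E" and eq: "quot_map G H e = quot_map G H e'" and ne: "e \<noteq> e'"
  have ec: "e \<in> carrier G" "e' \<in> carrier G"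
    using e E by auto
  define c :: "'a \<Rightarrow> int" where "c x = (if x = e then 1 else - 1)" for x
  have "pow_prod G {e, e'} c = e \<otimes> inv e'"
    using ec ne unfolding pow_prod_def c_def by (simp add: int_pow_neg)
  also have "\<dots> \<in> H"
    using eq repr_independenceD[OF H ec(1)] subgroup.rcos_module_imp[OF H is_group ec(2)]
    unfolding quot_map_def by simp
  finally have "pow_prod G {e, e'} c \<in> H" .
  moreover have "finite {e, e'}" "{e, e'} \<subseteq> E"
    using e by auto
  ultimately have "int N dvd c e"
    using indep unfolding indep_mod_def by blast
  then show False
    using N unfolding c_def by simp
qed

lemma pow_prod_quot_map_eq_one_iff:
  assumes H: "subgroup H G" and S: "S \<subseteq> carrier G" "inj_on (quot_map G H) S"
  shows "pow_prod (G Mod H) (quot_map G H ` S) c = \<one>\<^bsub>G Mod H\<^esub> \<longleftrightarrow>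
    pow_prod G S (\<lambda>x. c (quot_map G H x)) \<in> H"
proof -
  have \<pi>: "quot_map G H = (\<lambda>a. H #> a)"
    by (rule ext) (simp add: quot_map_def)
  have hom: "quot_map G H \<in> hom G (G Mod H)"
    unfolding \<pi> using normal.r_coset_hom_Mod[OF subgroup_imp_normal[OF H]] .
  have kernel: "quot_map G H x = \<one>\<^bsub>G Mod H\<^esub> \<longleftrightarrow> x \<in> H" if "x \<in> carrier G" for x
    using rcos_self[OF that H] coset_join2[OF that H] by (auto simp: \<pi>)
  have "pow_prod (G Mod H) (quot_map G H ` S) c = quot_map G H (pow_prod G S (\<lambda>x. c (quot_map G H x)))"
    by (rule pow_prod_hom_image[OF hom abelian_FactGroup[OF H] S, symmetric])
  then show ?thesis
    using kernel[OF pow_prod_closed[OF S(1)]] by simp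
qed

lemma indep_mod_quotient_iff:
  assumes H: "subgroup H G" and E: "E \<subseteq> carrier G" and inj: "inj_on (quot_map G H) E"
  shows "indep_mod N (G Mod H) (quot_map G H ` E) {\<one>\<^bsub>G Mod H\<^esub>} \<longleftrightarrow> indep_mod N G E H"
proof -
  let ?\<pi> = "quot_map G H"
  have one_iff: "pow_prod (G Mod H) (?\<pi> ` S) c = \<one>\<^bsub>G Mod H\<^esub> \<longleftrightarrow> pow_prod G S (\<lambda>x. c (?\<pi> x)) \<in> H"
    if "S \<subseteq> E" for S c
    using pow_prod_quot_map_eq_one_iff[OF H] that E inj_on_subset[OF inj that] by blast
  show ?thesis
  proof
    assume indep: "indep_mod N (G Mod H) (?\<pi> ` E) {\<one>\<^bsub>G Mod H\<^esub>}"
    show "indep_mod N G E H"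
      unfolding indep_mod_def
    proof (intro allI impI ballI)
      fix S c e assume S: "finite S \<and> S \<subseteq> E \<and> pow_prod G S c \<in> H" and e: "e \<in> S"
      define c' where "c' = c \<circ> inv_into E ?\<pi>"
      have "pow_prod G S (\<lambda>x. c' (?\<pi> x)) = pow_prod G S c"
        using S E inj unfolding c'_def by (intro pow_prod_cong) auto
      then have "pow_prod (G Mod H) (?\<pi> ` S) c' = \<one>\<^bsub>G Mod H\<^esub>"
        using S one_iff by auto
      then have "int N dvd c' (?\<pi> e)"
        using indep S e unfolding indep_mod_def by blast
      then show "int N dvd c e"
        using S e inj unfolding c'_def by auto
    qed
  next
    assume indep: "indep_mod N G E H"
    show "indep_mod N (G Mod H) (?\<pi> ` E) {\<one>\<^bsub>G Mod H\<^esub>}"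
      unfolding indep_mod_def
    proof (intro allI impI ballI)
      fix S' c y
      assume S': "finite S' \<and> S' \<subseteq> ?\<pi> ` E \<and> pow_prod (G Mod H) S' c \<in> {\<one>\<^bsub>G Mod H\<^esub>}"
        and y: "y \<in> S'"
      define S where "S = E \<inter> ?\<pi> -` S'"
      have S: "S \<subseteq> E" "?\<pi> ` S = S'"
        using S' unfolding S_def by auto
      have "finite S"
        using S S' finite_imageD[of ?\<pi> S] inj_on_subset[OF inj S(1)] by simp
      moreover have "pow_prod G S (\<lambda>x. c (?\<pi> x)) \<in> H"
        using S S' one_iff[OF S(1)] by simp
      ultimately have "\<forall>x\<in>S. int N dvd c (?\<pi> x)"
        using indep S unfolding indep_mod_def by blast
      then show "int N dvd c y"
        using y S by blast
    qed
  qed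
qed

end

section \<open>The subgroups Gamma_{p^k}\<close>

lemma not_prime_power_dvd_iff:
  fixes m p k :: nat
  assumes p: "Factorial_Ring.prime p" and k: "k \<ge> 1" and m: "m \<noteq> 0"
  shows "\<not> p ^ k dvd m \<longleftrightarrow> (\<exists>q. \<not> p dvd q \<and> m dvd p ^ (k - 1) * q)"
proof
  assume not_dvd: "\<not> p ^ k dvd m"
  obtain q where q: "m = p ^ multiplicity p m * q" "\<not> p dvd q"
    using multiplicity_decompose'[OF m prime_elem_not_unit[OF prime_imp_prime_elem[OF p]]] by blast
  have "multiplicity p m < k"
  proof (rule ccontr)
    assume "\<not> multiplicity p m < k"
    then have "p ^ k dvd p ^ multiplicity p m"
      by (simp add: le_imp_power_dvd)
    then show False
      using not_dvd q(1) by (metis dvd_mult2)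
  qed
  then have "p ^ multiplicity p m * q dvd p ^ (k - 1) * q"
    by (intro mult_dvd_mono le_imp_power_dvd) simp_all
  then have "m dvd p ^ (k - 1) * q"
    using q(1) by simp
  with q(2) show "\<exists>q. \<not> p dvd q \<and> m dvd p ^ (k - 1) * q"
    by blast
next
  assume "\<exists>q. \<not> p dvd q \<and> m dvd p ^ (k - 1) * q"
  then obtain q where q: "\<not> p dvd q" "m dvd p ^ (k - 1) * q"
    by blast
  show "\<not> p ^ k dvd m"
  proof
    assume "p ^ k dvd m"
    moreover have "p ^ k = p ^ (k - 1) * p"
      using k by (metis power_minus_mult less_le_trans zero_less_one)
    ultimately have "p ^ (k - 1) * p dvd p ^ (k - 1) * q"
      using q(2) by (metis dvd_trans)
    then show False
      using q(1) p by (simp add: prime_gt_0_nat)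
  qed
qed

context group
begin

text \<open>No condition \<open>q > 0\<close> is needed: \<open>p\<close> divides \<open>0\<close>.\<close>
lemma sub_not_dvd_prime_power_iff:
  assumes "Factorial_Ring.prime p" "k \<ge> 1"
  shows "x \<in> sub_not_dvd G (p ^ k) \<longleftrightarrow>
    x \<in> carrier G \<and> (\<exists>q. \<not> p dvd q \<and> x [^] (p ^ (k - 1) * q) = \<one>)"
proof (cases "x \<in> carrier G")
  case True
  have "x \<in> torsion G \<longleftrightarrow> (\<exists>m > 0. ord x dvd m)"
    using True pow_eq_id[OF True] unfolding torsion_def by simp
  then have "x \<in> torsion G \<longleftrightarrow> ord x \<noteq> 0"
    by (auto intro: gr0I)
  then have "x \<in> sub_not_dvd G (p ^ k) \<longleftrightarrow> ord x \<noteq> 0 \<and> \<not> p ^ k dvd ord x"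
    unfolding sub_not_dvd_def by simp
  also have "\<dots> \<longleftrightarrow> (\<exists>q. \<not> p dvd q \<and> ord x dvd p ^ (k - 1) * q)"
  proof (cases "ord x = 0")
    case True
    have "p ^ (k - 1) * q \<noteq> 0" if "\<not> p dvd q" for q
      using that assms(1) by (auto simp: prime_gt_0_nat intro: gr0I)
    with True show ?thesis
      by auto
  qed (simp add: not_prime_power_dvd_iff[OF assms])
  also have "\<dots> \<longleftrightarrow> (\<exists>q. \<not> p dvd q \<and> x [^] (p ^ (k - 1) * q) = \<one>)"
    using pow_eq_id[OF True] by simp
  finally show ?thesis
    using True by simp
qed (simp add: sub_not_dvd_def torsion_def)

end

lemma prime_power_dvd_mult_cancel:
  fixes c :: int and p q a b :: nat
  assumes p: "Factorial_Ring.prime p" and q: "\<not> p dvd q"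
    and dvd: "int (p ^ (a + b)) dvd c * int (p ^ a * q)"
  shows "int (p ^ b) dvd c"
proof -
  have "int (p ^ a) * int (p ^ b) dvd int (p ^ a) * (c * int q)"
    using dvd by (simp add: power_add ac_simps)
  then have "int (p ^ b) dvd c * int q"
    using p by (simp add: prime_gt_0_nat)
  moreover have "coprime (int (p ^ b)) (int q)"
    using prime_imp_coprime[OF p q] by simp
  ultimately show ?thesis
    using coprime_dvd_mult_left_iff by blast
qed

context comm_group
begin

lemma subgroup_sub_not_dvd:
  assumes p: "Factorial_Ring.prime p" and k: "k \<ge> 1"
  shows "subgroup (sub_not_dvd G (p ^ k)) G"
proof (rule subgroupI)
  note iff = sub_not_dvd_prime_power_iff[OF p k]
  show "sub_not_dvd G (p ^ k) \<subseteq> carrier G"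
    using iff by blast
  have "\<not> p dvd 1"
    using prime_elem_not_unit[OF prime_imp_prime_elem[OF p]] .
  then show "sub_not_dvd G (p ^ k) \<noteq> {}"
    using iff[of \<one>] by (metis empty_iff nat_pow_one one_closed)
next
  fix x assume "x \<in> sub_not_dvd G (p ^ k)"
  then obtain q where x: "x \<in> carrier G" "\<not> p dvd q" "x [^] (p ^ (k - 1) * q) = \<one>"
    using sub_not_dvd_prime_power_iff[OF p k] by blast
  then have "inv x [^] (p ^ (k - 1) * q) = \<one>"
    by (simp add: nat_pow_inv)
  then show "inv x \<in> sub_not_dvd G (p ^ k)"
    using x sub_not_dvd_prime_power_iff[OF p k] by blast
next
  fix x y assume "x \<in> sub_not_dvd G (p ^ k)" "y \<in> sub_not_dvd G (p ^ k)"
  then obtain q r where x: "x \<in> carrier G" "\<not> p dvd q" "x [^] (p ^ (k - 1) * q) = \<one>"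
    and y: "y \<in> carrier G" "\<not> p dvd r" "y [^] (p ^ (k - 1) * r) = \<one>"
    using sub_not_dvd_prime_power_iff[OF p k] by meson
  have "x [^] (p ^ (k - 1) * (q * r)) = (x [^] (p ^ (k - 1) * q)) [^] r"
    using nat_pow_pow[OF x(1)] by (simp add: mult.assoc)
  moreover have "y [^] (p ^ (k - 1) * (q * r)) = (y [^] (p ^ (k - 1) * r)) [^] q"
    using nat_pow_pow[OF y(1)] by (simp add: ac_simps)
  ultimately have "x [^] (p ^ (k - 1) * (q * r)) = \<one>" "y [^] (p ^ (k - 1) * (q * r)) = \<one>"
    using x y by simp_all
  then have "(x \<otimes> y) [^] (p ^ (k - 1) * (q * r)) = \<one>"
    using x y by (simp add: pow_mult_distrib m_comm)
  moreover have "\<not> p dvd q * r"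
    using x y p by (simp add: prime_dvd_mult_iff)
  ultimately show "x \<otimes> y \<in> sub_not_dvd G (p ^ k)"
    using x y sub_not_dvd_prime_power_iff[OF p k] by blast
qed

lemma indep_mod_one_imp_indep_mod_sub_not_dvd:
  assumes p: "Factorial_Ring.prime p" and k: "1 \<le> k" "k \<le> n" and E: "E \<subseteq> carrier G"
    and indep: "indep_mod (p ^ n) G E {\<one>}"
  shows "indep_mod (p ^ (n + 1 - k)) G E (sub_not_dvd G (p ^ k))"
  unfolding indep_mod_def
proof (intro allI impI ballI)
  fix S c e assume S: "finite S \<and> S \<subseteq> E \<and> pow_prod G S c \<in> sub_not_dvd G (p ^ k)" and e: "e \<in> S"
  then obtain q where q: "\<not> p dvd q" "pow_prod G S c [^] (p ^ (k - 1) * q) = \<one>"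
    using sub_not_dvd_prime_power_iff[OF p k(1)] by blast
  have SG: "S \<subseteq> carrier G"
    using S E by blast
  have "pow_prod G S (\<lambda>e. c e * int (p ^ (k - 1) * q)) = pow_prod G S c [^] int (p ^ (k - 1) * q)"
    by (rule pow_prod_int_pow[OF SG, symmetric])
  also have "\<dots> = \<one>"
    using q(2) by (simp only: int_pow_int)
  finally have "int (p ^ n) dvd c e * int (p ^ (k - 1) * q)"
    using indep S e unfolding indep_mod_def by blast
  moreover have "n = (k - 1) + (n + 1 - k)"
    using k by simp
  ultimately show "int (p ^ (n + 1 - k)) dvd c e"
    using prime_power_dvd_mult_cancel[OF p q(1)] by metis
qed

lemma indep_mod_sub_not_dvd_dvd_step:
  assumes p: "Factorial_Ring.prime p" and k: "a < k" and E: "E \<subseteq> carrier G"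
    and indep: "indep_mod (p ^ b) G E (sub_not_dvd G (p ^ k))"
    and S: "finite S" "S \<subseteq> E" "pow_prod G S c = \<one>" and dvd: "\<And>e. e \<in> S \<Longrightarrow> int p ^ a dvd c e"
    and e: "e \<in> S"
  shows "int p ^ (a + b) dvd c e"
proof -
  define d where "d e = c e div int p ^ a" for e
  have c: "c e = d e * int (p ^ a)" if "e \<in> S" for e
    using dvd[OF that] unfolding d_def by simp
  have SG: "S \<subseteq> carrier G"
    using S E by blast
  have "\<one> = pow_prod G S (\<lambda>e. d e * int (p ^ a))"
    using S(3) pow_prod_cong[OF SG c] by simp
  also have "\<dots> = pow_prod G S d [^] (p ^ a)"
    by (simp only: pow_prod_int_pow[OF SG, symmetric] int_pow_int)
  finally have "pow_prod G S d [^] (p ^ a) = \<one>"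
    by simp
  then have "pow_prod G S d [^] (p ^ (k - 1) * 1) = \<one>"
    using k nat_pow_pow[OF pow_prod_closed[OF SG], of d "p ^ a" "p ^ (k - 1 - a)"]
    by (simp add: power_add[symmetric])
  moreover have "\<not> p dvd 1"
    using prime_elem_not_unit[OF prime_imp_prime_elem[OF p]] .
  moreover have "k \<ge> 1"
    using k by simp
  ultimately have "pow_prod G S d \<in> sub_not_dvd G (p ^ k)"
    using sub_not_dvd_prime_power_iff[OF p] SG by blast
  then have "int (p ^ b) dvd d e"
    using indep S e unfolding indep_mod_def by blast
  then show ?thesis
    using c[OF e] by (simp add: power_add mult_dvd_mono mult.commute)
qed

lemma indep_mod_sub_not_dvd_imp_indep_mod_one:
  assumes p: "Factorial_Ring.prime p" and k: "1 \<le> k" "k \<le> n" and E: "E \<subseteq> carrier G"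
    and indep: "indep_mod (p ^ (n + 1 - k)) G E (sub_not_dvd G (p ^ k))"
  shows "indep_mod (p ^ n) G E {\<one>}"
  unfolding indep_mod_def
proof (intro allI impI)
  fix S c assume S: "finite S \<and> S \<subseteq> E \<and> pow_prod G S c \<in> {\<one>}"
  note step = indep_mod_sub_not_dvd_dvd_step[OF p _ E indep, of _ S c]
  have all: "\<forall>e\<in>S. int p ^ a dvd c e" if "a \<le> k - 1" for a
    using that
  proof (induction a)
    case (Suc a)
    then have "int p ^ (a + (n + 1 - k)) dvd c e" if "e \<in> S" for e
      using step S that by simp
    moreover have "int p ^ Suc a dvd int p ^ (a + (n + 1 - k))"
      using k by (intro le_imp_power_dvd) simp
    ultimately show ?case
      using dvd_trans by blast
  qed simp
  have "int p ^ (k - 1 + (n + 1 - k)) dvd c e" if "e \<in> S" for e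
    by (rule step) (use S all[of "k - 1"] k that in auto)
  then show "\<forall>e\<in>S. int (p ^ n) dvd c e"
    using k by simp
qed

lemma PR_prime_power_iff_quotient:
  assumes p: "Factorial_Ring.prime p" and k: "1 \<le> k" "k \<le> n" and E: "E \<subseteq> carrier G"
  defines "H \<equiv> sub_not_dvd G (p ^ k)"
  shows "PR (p ^ n) G E \<longleftrightarrow>
    inj_on (quot_map G H) E \<and> PR (p ^ (n + 1 - k)) (G Mod H) (quot_map G H ` E)"
proof -
  have H: "subgroup H G"
    unfolding H_def using p k by (intro subgroup_sub_not_dvd)
  have "p ^ (n + 1 - k) \<noteq> 1"
    using prime_gt_1_nat[OF p] k by simp
  have "quot_map G H ` E \<subseteq> carrier (G Mod H)"
    using E unfolding carrier_FactGroup quot_map_def by auto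
  have "PR (p ^ n) G E \<longleftrightarrow> indep_mod (p ^ n) G E {\<one>}"
    using p E by (intro PR_iff_indep_mod_one) (simp_all add: prime_gt_0_nat)
  also have "\<dots> \<longleftrightarrow> indep_mod (p ^ (n + 1 - k)) G E H"
    unfolding H_def using p k E
    by (metis indep_mod_one_imp_indep_mod_sub_not_dvd indep_mod_sub_not_dvd_imp_indep_mod_one)
  also have "\<dots> \<longleftrightarrow> inj_on (quot_map G H) E \<and> indep_mod (p ^ (n + 1 - k)) G E H"
    using indep_mod_imp_inj_on_quot_map[OF H E] \<open>p ^ (n + 1 - k) \<noteq> 1\<close> by blast
  also have "\<dots> \<longleftrightarrow> inj_on (quot_map G H) E \<and>
      indep_mod (p ^ (n + 1 - k)) (G Mod H) (quot_map G H ` E) {\<one>\<^bsub>G Mod H\<^esub>}"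
    using indep_mod_quotient_iff[OF H E] by blast
  also have "\<dots> \<longleftrightarrow> inj_on (quot_map G H) E \<and> PR (p ^ (n + 1 - k)) (G Mod H) (quot_map G H ` E)"
    using comm_group.PR_iff_indep_mod_one[OF abelian_FactGroup[OF H]]
      \<open>quot_map G H ` E \<subseteq> carrier (G Mod H)\<close> p by (simp add: prime_gt_0_nat)
  finally show ?thesis .
qed

end

theorem proposition3p2:
  fixes \<Gamma> :: "('a, 'b) monoid_scheme" and E :: "'a set" and n p :: nat
  assumes "comm_group \<Gamma>"
    and "E \<subseteq> carrier \<Gamma>"
    and "n \<ge> 1"
    and "Factorial_Ring.prime p"
  shows "(PR (p ^ n) \<Gamma> E \<longleftrightarrow>
           (\<forall>k \<in> {1..n}. inj_on (quot_map \<Gamma> (sub_not_dvd \<Gamma> (p ^ k))) E \<and>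
              PR (p ^ (n + 1 - k)) (\<Gamma> Mod (sub_not_dvd \<Gamma> (p ^ k)))
                 (quot_map \<Gamma> (sub_not_dvd \<Gamma> (p ^ k)) ` E)))
       \<and> (PR (p ^ n) \<Gamma> E \<longleftrightarrow>
           (\<exists>k \<in> {1..n}. inj_on (quot_map \<Gamma> (sub_not_dvd \<Gamma> (p ^ k))) E \<and>
              PR (p ^ (n + 1 - k)) (\<Gamma> Mod (sub_not_dvd \<Gamma> (p ^ k)))
                 (quot_map \<Gamma> (sub_not_dvd \<Gamma> (p ^ k)) ` E)))"
proof -
  have "1 \<in> {1..n}"
    using assms(3) by simp
  moreover have "PR (p ^ n) \<Gamma> E \<longleftrightarrow>
      inj_on (quot_map \<Gamma> (sub_not_dvd \<Gamma> (p ^ k))) E \<and>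
      PR (p ^ (n + 1 - k)) (\<Gamma> Mod (sub_not_dvd \<Gamma> (p ^ k))) (quot_map \<Gamma> (sub_not_dvd \<Gamma> (p ^ k)) ` E)"
    if "k \<in> {1..n}" for k
    using comm_group.PR_prime_power_iff_quotient[OF assms(1,4)] that assms(2) by simp
  ultimately show ?thesis
    by blast
qed

end
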